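(* Let $q=p^\ell$ be a prime power with $p$ prime and $d$ a positive integer; write $d+1=s(q-q/p)+r$ with integers $s\ge0$, $0\le r<q-q/p$. Let $k\ge s+1$, define $e^\star\in\{0,\dots,q-1\}^k$ by $e^\star_i=q-q/p$ for $1\le i\le s$, $e^\star_{s+1}=q-1$, $e^\star_j=0$ for $j\ge s+2$, let $d^\star=|e^\star|_1$, and let $\mathcal{E}=\{e\in\{0,\dots,q-1\}^k: |e|_1\le d^\star-1\}$. Let $Q(k)=2q^{s+1}\log(q)\binom{k+d^\star}{d^\star}$ and choose $S\subseteq\mathbb{F}_q^k$ uniformly at random among subsets of size $Q(k)$. Consider the linear system over $\mathbb{F}_q$ in variables $\{z_\alpha\}_{\alpha\in S}$ consisting of the equations $\sum_{\alpha\in S}z_\alpha\alpha^{e'}=0$ for each $e'\in\mathcal{E}$, together with $\sum_{\alpha\in S}z_\alpha\alpha^{e^\star}=1$. Then the probability that this system has no solution is at most $q^{-\binom{k+d^\star}{d^\star}}$.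
   Context: For $\alpha\in\mathbb{F}_q^k$ and $e\in\{0,\dots,q-1\}^k$, $\alpha^e=\prod_i\alpha_i^{e_i}$ (with $0^0=1$); $|e|_1=\sum_ie_i$. Here $\log$ is the natural logarithm, and it is implicitly assumed that $Q(k)$ is an integer with $Q(k)\le q^k$ so that $S$ can be chosen. *)

theory Defs
  imports Complex_Main "HOL-Library.FuncSet" "HOL-Library.Cardinality" "HOL-Computational_Algebra.Primes"
begin

text \<open>Points of F_q^k are represented as functions on the index set {0..<k}
  (extensional, i.e. undefined outside). Coordinates are 0-based: paper index i
  corresponds to index i-1 here.\<close>

definition points :: "nat \<Rightarrow> (nat \<Rightarrow> 'a) set" where
  "points k = PiE {..<k} (\<lambda>_. UNIV)"

definition exps :: "nat \<Rightarrow> nat \<Rightarrow> (nat \<Rightarrow> nat) set" where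
  "exps q k = PiE {..<k} (\<lambda>_. {..<q})"

definition monomial_eval :: "nat \<Rightarrow> (nat \<Rightarrow> 'a::comm_monoid_mult) \<Rightarrow> (nat \<Rightarrow> nat) \<Rightarrow> 'a" where
  "monomial_eval k \<alpha> e = (\<Prod>i<k. \<alpha> i ^ e i)"

definition norm1 :: "nat \<Rightarrow> (nat \<Rightarrow> nat) \<Rightarrow> nat" where
  "norm1 k e = (\<Sum>i<k. e i)"

definition estar :: "nat \<Rightarrow> nat \<Rightarrow> nat \<Rightarrow> nat \<Rightarrow> (nat \<Rightarrow> nat)" where
  "estar p q s k = restrict (\<lambda>i. if i < s then q - q div p else if i = s then q - 1 else 0) {..<k}"

definition Ecal :: "nat \<Rightarrow> nat \<Rightarrow> nat \<Rightarrow> (nat \<Rightarrow> nat) set" where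
  "Ecal q k dstar = {e \<in> exps q k. norm1 k e \<le> dstar - 1}"

definition system_solvable ::
  "nat \<Rightarrow> nat \<Rightarrow> nat \<Rightarrow> (nat \<Rightarrow> nat) \<Rightarrow> (nat \<Rightarrow> 'a::field) set \<Rightarrow> bool" where
  "system_solvable q k dstar es S \<longleftrightarrow>
     (\<exists>z :: (nat \<Rightarrow> 'a) \<Rightarrow> 'a.
        (\<forall>e' \<in> Ecal q k dstar. (\<Sum>\<alpha>\<in>S. z \<alpha> * monomial_eval k \<alpha> e') = 0) \<and>
        (\<Sum>\<alpha>\<in>S. z \<alpha> * monomial_eval k \<alpha> es) = 1)"

end

theory Submission
  imports Defs "HOL-Computational_Algebra.Polynomial"
begin

text \<open>If the system has no solution then, by the Fredholm alternative, the monomial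
  \<open>x^e*\<close> agrees on \<open>S\<close> with a linear combination \<open>g\<close> of the monomials \<open>x^e\<close>, \<open>e \<in> E\<close>.
  But \<open>x^e* - g\<close> is nonzero on at least \<open>q^(k-s-1)\<close> points: on each fibre over the last
  \<open>k-s-1\<close> coordinates, summing it against \<open>x^((q-1) - e*)\<close> over the first \<open>s+1\<close> coordinates
  gives \<open>\<plusminus>1\<close>, because the power sum \<open>\<Sum>t. t^j\<close> over the field vanishes for \<open>0 \<le> j < 2(q-1)\<close>
  except at \<open>j = q-1\<close>, and each \<open>e \<in> E\<close> differs from \<open>e*\<close> on those coordinates.
  So \<open>S\<close> lies in one of at most \<open>q^|E|\<close> sets of density at most \<open>1 - q^-(s+1)\<close>, and the
  union bound gives \<open>q^N (1 - q^-(s+1))^Q \<le> q^N exp (-Q / q^(s+1)) \<le> q^-N\<close>.\<close>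

lemma card_UNIV_field_ge_2: "CARD('a::{finite,field}) \<ge> 2"
proof -
  have "card {0::'a, 1} \<le> CARD('a)" by (rule card_mono) auto
  then show ?thesis by simp
qed

lemma of_nat_card_UNIV_field: "of_nat CARD('a::{finite,field}) = (0::'a)"
proof -
  have "(\<Sum>t\<in>UNIV. t + 1) = (\<Sum>t\<in>UNIV. t :: 'a)"
    by (rule sum.reindex_bij_witness[of _ "\<lambda>t. t - 1" "\<lambda>t. t + 1"]) auto
  moreover have "(\<Sum>t\<in>UNIV. t + 1) = (\<Sum>t\<in>UNIV. t :: 'a) + of_nat CARD('a)"
    by (simp add: sum.distrib)
  ultimately show ?thesis by simp
qed

lemma field_power_card_minus_1:
  fixes x :: "'a::{finite,field}"
  assumes "x \<noteq> 0"
  shows "x ^ (CARD('a) - 1) = 1"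
proof -
  have "(\<Prod>y\<in>-{0}. x * y) = (\<Prod>y\<in>-{0::'a}. y)"
    by (rule prod.reindex_bij_witness[of _ "\<lambda>y. y / x" "\<lambda>y. x * y"]) (use assms in auto)
  moreover have "card (- {0::'a}) = CARD('a) - 1"
    by (simp add: Compl_eq_Diff_UNIV card_Diff_singleton)
  ultimately have "x ^ (CARD('a) - 1) * (\<Prod>y\<in>-{0::'a}. y) = 1 * (\<Prod>y\<in>-{0::'a}. y)"
    by (simp add: prod.distrib)
  then show ?thesis by simp
qed

lemma sum_UNIV_power_eq_0_if_power_neq_1:
  fixes a :: "'a::{finite,field}"
  assumes "a \<noteq> 0" "a ^ j \<noteq> 1"
  shows "(\<Sum>t\<in>UNIV. t ^ j) = (0::'a)"
proof -
  have "(\<Sum>t\<in>UNIV. t ^ j) = (\<Sum>t\<in>UNIV. (a * t) ^ j)"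
    by (rule sum.reindex_bij_witness[of _ "\<lambda>t. a * t" "\<lambda>t. t / a"]) (use assms in auto)
  also have "\<dots> = a ^ j * (\<Sum>t\<in>UNIV. t ^ j)"
    by (simp add: power_mult_distrib sum_distrib_left)
  finally have "(1 - a ^ j) * (\<Sum>t\<in>UNIV. t ^ j) = 0"
    by (simp add: algebra_simps)
  then show ?thesis using assms(2) by simp
qed

text \<open>Some nonzero \<open>a\<close> has \<open>a ^ j \<noteq> 1\<close>, since \<open>X ^ j - 1\<close> has at most \<open>j\<close> roots.\<close>
lemma sum_UNIV_power_eq_0:
  assumes "0 < j" "j < CARD('a::{finite,field}) - 1"
  shows "(\<Sum>t\<in>UNIV. (t::'a) ^ j) = 0"
proof -
  obtain a :: 'a where "a \<noteq> 0" "a ^ j \<noteq> 1"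
  proof (rule ccontr)
    assume "\<not> thesis"
    then have roots: "- {0} \<subseteq> {x::'a. poly (monom 1 j + [:-1:]) x = 0}"
      using that by (auto simp: poly_monom)
    have "degree (monom (1::'a) j + [:-1:]) = j"
      using assms(1) by (simp add: degree_add_eq_left degree_monom_eq)
    then have "card {x::'a. poly (monom 1 j + [:-1:]) x = 0} \<le> j"
      using assms(1) by (metis card_poly_roots_bound degree_0 less_not_refl)
    moreover have "card (- {0::'a}) = CARD('a) - 1"
      by (simp add: Compl_eq_Diff_UNIV card_Diff_singleton)
    ultimately show False
      using card_mono[OF finite roots] assms(2) by simp
  qed
  then show ?thesis by (rule sum_UNIV_power_eq_0_if_power_neq_1)
qed

lemma sum_UNIV_power:
  fixes j :: nat
  assumes "j < 2 * (CARD('a::{finite,field}) - 1)"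
  shows "(\<Sum>t\<in>UNIV. (t::'a) ^ j) = (if j = CARD('a) - 1 then -1 else 0)"
proof -
  let ?q = "CARD('a)"
  have q: "?q \<ge> 2" by (rule card_UNIV_field_ge_2)
  consider "j = 0" | "0 < j" "j < ?q - 1" | "j = ?q - 1" | "?q - 1 < j" by linarith
  then show ?thesis
  proof cases
    case 1
    then show ?thesis using q by (simp add: of_nat_card_UNIV_field)
  next
    case 2
    then show ?thesis by (simp add: sum_UNIV_power_eq_0)
  next
    case 3
    have "(\<Sum>t\<in>UNIV. (t::'a) ^ j) = (\<Sum>t\<in>UNIV. if t = (0::'a) then 0 else 1)"
      by (rule sum.cong) (use q field_power_card_minus_1 in \<open>auto simp: 3\<close>)
    also have "\<dots> = of_nat (?q - 1)"
      by (simp add: sum.If_cases Compl_eq_Diff_UNIV card_Diff_singleton)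
    finally show ?thesis using 3 q by (simp add: of_nat_diff of_nat_card_UNIV_field)
  next
    case 4
    define j' where "j' = j - (?q - 1)"
    have j: "j = j' + (?q - 1)" "0 < j'" using 4 by (auto simp: j'_def)
    have "t ^ j = t ^ j'" for t :: 'a
    proof (cases "t = 0")
      case False
      have "t ^ j = t ^ j' * t ^ (?q - 1)" by (simp only: j(1) power_add)
      then show ?thesis using field_power_card_minus_1[OF False] by simp
    qed (use 4 j(2) in \<open>simp add: zero_power\<close>)
    then have "(\<Sum>t\<in>UNIV. (t::'a) ^ j) = (\<Sum>t\<in>UNIV. t ^ j')" by simp
    also have "\<dots> = 0"
      using 4 assms by (intro sum_UNIV_power_eq_0) (auto simp: j'_def)
    finally show ?thesis using 4 by simp
  qed
qed

definition in_span_on :: "'p set \<Rightarrow> ('e \<Rightarrow> 'p \<Rightarrow> 'a::field) \<Rightarrow> 'e set \<Rightarrow> ('p \<Rightarrow> 'a) \<Rightarrow> bool" where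
  "in_span_on S u E w \<longleftrightarrow> (\<exists>c. \<forall>\<alpha>\<in>S. w \<alpha> = (\<Sum>e\<in>E. c e * u e \<alpha>))"

definition separated_on :: "'p set \<Rightarrow> ('e \<Rightarrow> 'p \<Rightarrow> 'a::field) \<Rightarrow> 'e set \<Rightarrow> ('p \<Rightarrow> 'a) \<Rightarrow> bool" where
  "separated_on S u E w \<longleftrightarrow>
     (\<exists>z. (\<forall>e\<in>E. (\<Sum>\<alpha>\<in>S. z \<alpha> * u e \<alpha>) = 0) \<and> (\<Sum>\<alpha>\<in>S. z \<alpha> * w \<alpha>) = 1)"

lemma in_span_on_or_separated_on_empty:
  assumes "finite S"
  shows "in_span_on S u {} w \<or> separated_on S u {} w"
proof (cases "\<forall>\<alpha>\<in>S. w \<alpha> = 0")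
  case True
  then show ?thesis by (simp add: in_span_on_def)
next
  case False
  then obtain \<beta> where \<beta>: "\<beta> \<in> S" "w \<beta> \<noteq> 0" by blast
  define z where "z \<alpha> = (if \<alpha> = \<beta> then inverse (w \<beta>) else 0)" for \<alpha>
  have "(\<Sum>\<alpha>\<in>S. z \<alpha> * w \<alpha>) = (\<Sum>\<alpha>\<in>S. if \<alpha> = \<beta> then inverse (w \<beta>) * w \<alpha> else 0)"
    by (rule sum.cong) (auto simp: z_def)
  also have "\<dots> = 1"
    using \<beta> assms by (simp add: sum.delta')
  finally show ?thesis unfolding separated_on_def by blast
qed

lemma in_span_on_insert:
  assumes "in_span_on S u E w" "e\<^sub>0 \<notin> E" "finite E"
  shows "in_span_on S u (insert e\<^sub>0 E) w"
proof -
  obtain c where "\<forall>\<alpha>\<in>S. w \<alpha> = (\<Sum>e\<in>E. c e * u e \<alpha>)"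
    using assms(1) by (auto simp: in_span_on_def)
  then have "\<forall>\<alpha>\<in>S. w \<alpha> = (\<Sum>e\<in>insert e\<^sub>0 E. (c(e\<^sub>0 := 0)) e * u e \<alpha>)"
    using assms(2,3) by (auto intro: sum.cong)
  then show ?thesis unfolding in_span_on_def by blast
qed

lemma in_span_on_insert_shift:
  assumes "in_span_on S u E (\<lambda>\<alpha>. w \<alpha> - t * u e\<^sub>0 \<alpha>)" "e\<^sub>0 \<notin> E" "finite E"
  shows "in_span_on S u (insert e\<^sub>0 E) w"
proof -
  obtain c where "\<forall>\<alpha>\<in>S. w \<alpha> - t * u e\<^sub>0 \<alpha> = (\<Sum>e\<in>E. c e * u e \<alpha>)"
    using assms(1) by (auto simp: in_span_on_def)
  then have "\<forall>\<alpha>\<in>S. w \<alpha> = (\<Sum>e\<in>insert e\<^sub>0 E. (c(e\<^sub>0 := t)) e * u e \<alpha>)"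
    using assms(2,3) by (auto simp: algebra_simps intro!: sum.cong)
  then show ?thesis unfolding in_span_on_def by blast
qed

lemma separated_on_insert:
  assumes "separated_on S u E w" "in_span_on S u E (u e\<^sub>0)"
  shows "separated_on S u (insert e\<^sub>0 E) w"
proof -
  obtain z where z: "\<forall>e\<in>E. (\<Sum>\<alpha>\<in>S. z \<alpha> * u e \<alpha>) = 0" "(\<Sum>\<alpha>\<in>S. z \<alpha> * w \<alpha>) = 1"
    using assms(1) by (auto simp: separated_on_def)
  obtain c where c: "\<forall>\<alpha>\<in>S. u e\<^sub>0 \<alpha> = (\<Sum>e\<in>E. c e * u e \<alpha>)"
    using assms(2) by (auto simp: in_span_on_def)
  have "(\<Sum>\<alpha>\<in>S. z \<alpha> * u e\<^sub>0 \<alpha>) = (\<Sum>e\<in>E. c e * (\<Sum>\<alpha>\<in>S. z \<alpha> * u e \<alpha>))"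
    using c by (simp add: sum_distrib_left sum.swap[of _ S] algebra_simps)
  then show ?thesis
    using z unfolding separated_on_def by auto
qed

lemma separated_on_insert_shift:
  assumes z\<^sub>2: "\<forall>e\<in>E. (\<Sum>\<alpha>\<in>S. z\<^sub>2 \<alpha> * u e \<alpha>) = 0" "(\<Sum>\<alpha>\<in>S. z\<^sub>2 \<alpha> * u e\<^sub>0 \<alpha>) = 1"
    and sep: "separated_on S u E (\<lambda>\<alpha>. w \<alpha> - (\<Sum>\<beta>\<in>S. z\<^sub>2 \<beta> * w \<beta>) * u e\<^sub>0 \<alpha>)"
  shows "separated_on S u (insert e\<^sub>0 E) w"
proof -
  let ?t = "\<Sum>\<beta>\<in>S. z\<^sub>2 \<beta> * w \<beta>"
  obtain z\<^sub>1 where z\<^sub>1: "\<forall>e\<in>E. (\<Sum>\<alpha>\<in>S. z\<^sub>1 \<alpha> * u e \<alpha>) = 0"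
      "(\<Sum>\<alpha>\<in>S. z\<^sub>1 \<alpha> * (w \<alpha> - ?t * u e\<^sub>0 \<alpha>)) = 1"
    using sep by (auto simp: separated_on_def)
  define m where "m = (\<Sum>\<alpha>\<in>S. z\<^sub>1 \<alpha> * u e\<^sub>0 \<alpha>)"
  define z where "z \<alpha> = z\<^sub>1 \<alpha> - m * z\<^sub>2 \<alpha>" for \<alpha>
  have dot: "(\<Sum>\<alpha>\<in>S. z \<alpha> * v \<alpha>) = (\<Sum>\<alpha>\<in>S. z\<^sub>1 \<alpha> * v \<alpha>) - m * (\<Sum>\<alpha>\<in>S. z\<^sub>2 \<alpha> * v \<alpha>)"
    for v by (simp add: z_def algebra_simps sum_subtractf sum_distrib_left)
  have "(\<Sum>\<alpha>\<in>S. z\<^sub>1 \<alpha> * (w \<alpha> - ?t * u e\<^sub>0 \<alpha>)) = (\<Sum>\<alpha>\<in>S. z\<^sub>1 \<alpha> * w \<alpha>) - m * ?t"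
    by (simp add: m_def right_diff_distrib sum_subtractf sum_distrib_left sum_distrib_right mult_ac)
  then have "(\<Sum>\<alpha>\<in>S. z \<alpha> * w \<alpha>) = 1"
    using z\<^sub>1(2) by (simp add: dot)
  moreover have "\<forall>e\<in>insert e\<^sub>0 E. (\<Sum>\<alpha>\<in>S. z \<alpha> * u e \<alpha>) = 0"
    using z\<^sub>1(1) z\<^sub>2 by (simp add: dot flip: m_def)
  ultimately show ?thesis unfolding separated_on_def by blast
qed

lemma in_span_on_or_separated_on:
  assumes "finite E" "finite S"
  shows "in_span_on S u E w \<or> separated_on S u E w"
  using assms(1)
proof (induction E arbitrary: w rule: finite_induct)
  case empty
  show ?case using assms(2) by (rule in_span_on_or_separated_on_empty)
next
  case (insert e\<^sub>0 E)
  show ?case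
  proof (cases "in_span_on S u E (u e\<^sub>0)")
    case True
    then show ?thesis
      using insert.IH[of w] insert.hyps by (auto intro: in_span_on_insert separated_on_insert)
  next
    case False
    then obtain z\<^sub>2 where "\<forall>e\<in>E. (\<Sum>\<alpha>\<in>S. z\<^sub>2 \<alpha> * u e \<alpha>) = 0" "(\<Sum>\<alpha>\<in>S. z\<^sub>2 \<alpha> * u e\<^sub>0 \<alpha>) = 1"
      using insert.IH[of "u e\<^sub>0"] by (auto simp: separated_on_def)
    then show ?thesis
      using insert.IH[of "\<lambda>\<alpha>. w \<alpha> - (\<Sum>\<beta>\<in>S. z\<^sub>2 \<beta> * w \<beta>) * u e\<^sub>0 \<alpha>"] insert.hyps
      by (auto intro: in_span_on_insert_shift separated_on_insert_shift)
  qed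
qed

lemma finite_points: "finite (points k :: (nat \<Rightarrow> 'a::finite) set)"
  by (simp add: points_def finite_PiE)

lemma card_points: "card (points k :: (nat \<Rightarrow> 'a::finite) set) = CARD('a) ^ k"
  by (simp add: points_def card_PiE)

lemma monomial_eval_add:
  "monomial_eval k \<alpha> (\<lambda>i. e i + f i) = monomial_eval k \<alpha> e * monomial_eval k \<alpha> f"
  by (simp add: monomial_eval_def power_add prod.distrib)

lemma sum_fiber_monomial_eval:
  fixes b :: "nat \<Rightarrow> 'a::{finite,comm_semiring_1}"
  assumes "I \<subseteq> {..<k}"
  shows "(\<Sum>x\<in>PiE I (\<lambda>_. UNIV). monomial_eval k (\<lambda>i. if i \<in> I then x i else b i) f)
       = (\<Prod>i\<in>{..<k} - I. b i ^ f i) * (\<Prod>i\<in>I. \<Sum>t\<in>UNIV. t ^ f i)"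
proof -
  have finI: "finite I" using assms finite_subset by blast
  have "monomial_eval k (\<lambda>i. if i \<in> I then x i else b i) f
      = (\<Prod>i\<in>{..<k} - I. b i ^ f i) * (\<Prod>i\<in>I. x i ^ f i)" for x
    unfolding monomial_eval_def using assms
    by (subst prod.subset_diff[of I]) (auto intro!: arg_cong2[where f = "(*)"] prod.cong)
  then have "(\<Sum>x\<in>PiE I (\<lambda>_. UNIV). monomial_eval k (\<lambda>i. if i \<in> I then x i else b i) f)
      = (\<Prod>i\<in>{..<k} - I. b i ^ f i) * (\<Sum>x\<in>PiE I (\<lambda>_. UNIV). \<Prod>i\<in>I. x i ^ f i)"
    by (simp add: sum_distrib_left)
  also have "(\<Sum>x\<in>PiE I (\<lambda>_. UNIV). \<Prod>i\<in>I. x i ^ f i) = (\<Prod>i\<in>I. \<Sum>t\<in>UNIV. (t::'a) ^ f i)"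
    by (rule prod_sum_PiE[symmetric]) (use finI in auto)
  finally show ?thesis .
qed

lemma sum_fiber_weighted_monomial_eval:
  fixes b :: "nat \<Rightarrow> 'a::{finite,field}"
  assumes I: "I \<subseteq> {..<k}"
    and es: "\<forall>i\<in>I. 0 < es i \<and> es i < CARD('a)" and f: "\<forall>i\<in>I. f i < CARD('a)"
  shows "(\<Sum>x\<in>PiE I (\<lambda>_. UNIV).
            monomial_eval k (\<lambda>i. if i \<in> I then x i else b i) f
          * monomial_eval k (\<lambda>i. if i \<in> I then x i else b i) (\<lambda>i. if i \<in> I then CARD('a) - 1 - es i else 0))
       = (\<Prod>i\<in>{..<k} - I. b i ^ f i) * (if \<forall>i\<in>I. f i = es i then (-1) ^ card I else 0)"
proof -
  let ?q = "CARD('a)"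
  define w where "w = (\<lambda>i. if i \<in> I then ?q - 1 - es i else 0)"
  have power_sum: "(\<Sum>t\<in>UNIV. (t::'a) ^ (f i + w i)) = (if f i = es i then -1 else 0)"
    if "i \<in> I" for i
  proof -
    have "f i < ?q" "0 < es i" "es i < ?q" using es f that by auto
    then show ?thesis using that by (subst sum_UNIV_power) (auto simp: w_def)
  qed
  have w_outside: "w i = 0" if "i \<notin> I" for i
    using that by (simp add: w_def)
  have "(\<Sum>x\<in>PiE I (\<lambda>_. UNIV).
            monomial_eval k (\<lambda>i. if i \<in> I then x i else b i) f
          * monomial_eval k (\<lambda>i. if i \<in> I then x i else b i) w)
      = (\<Prod>i\<in>{..<k} - I. b i ^ (f i + w i)) * (\<Prod>i\<in>I. \<Sum>t\<in>UNIV. t ^ (f i + w i))"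
    by (simp only: monomial_eval_add[symmetric] sum_fiber_monomial_eval[OF I])
  also have "\<dots> = (\<Prod>i\<in>{..<k} - I. b i ^ f i) * (\<Prod>i\<in>I. if f i = es i then -1 else 0)"
    using w_outside by (intro arg_cong2[where f = "(*)"] prod.cong) (auto simp: power_sum)
  also have "(\<Prod>i\<in>I. if f i = es i then -1 else 0) = (if \<forall>i\<in>I. f i = es i then (-1::'a) ^ card I else 0)"
    using I by (auto simp: finite_subset intro: prod_zero)
  finally show ?thesis by (simp only: w_def)
qed

text \<open>The functional \<open>h \<mapsto> \<Sum>\<^sub>x h x \<cdot> x^w\<close> over the fibre, with \<open>w = (q - 1) - es\<close> on \<open>I\<close>,
  is \<open>\<plusminus>1\<close> at the monomial \<open>es\<close> and vanishes at every monomial in \<open>E\<close>.\<close>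
lemma exists_fiber_point_nonzero:
  fixes b :: "nat \<Rightarrow> 'a::{finite,field}" and c :: "(nat \<Rightarrow> nat) \<Rightarrow> 'a"
  assumes I: "I \<subseteq> {..<k}"
    and es: "\<forall>i\<in>I. 0 < es i \<and> es i < CARD('a)" and es_supp: "\<forall>i\<in>{..<k} - I. es i = 0"
    and E: "\<forall>e\<in>E. (\<forall>i\<in>I. e i < CARD('a)) \<and> (\<exists>i\<in>I. e i \<noteq> es i)"
  shows "\<exists>x\<in>PiE I (\<lambda>_. UNIV).
           monomial_eval k (\<lambda>i. if i \<in> I then x i else b i) es
         \<noteq> (\<Sum>e\<in>E. c e * monomial_eval k (\<lambda>i. if i \<in> I then x i else b i) e)"
proof (rule ccontr)
  assume "\<not> ?thesis"
  then have zero: "monomial_eval k (\<lambda>i. if i \<in> I then x i else b i) es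
      - (\<Sum>e\<in>E. c e * monomial_eval k (\<lambda>i. if i \<in> I then x i else b i) e) = 0"
    if "x \<in> PiE I (\<lambda>_. UNIV)" for x
    using that by auto
  define L where "L f = (\<Sum>x\<in>PiE I (\<lambda>_. UNIV).
      monomial_eval k (\<lambda>i. if i \<in> I then x i else b i) f
    * monomial_eval k (\<lambda>i. if i \<in> I then x i else b i) (\<lambda>i. if i \<in> I then CARD('a) - 1 - es i else 0))"
    for f
  have "0 = L es - (\<Sum>e\<in>E. c e * L e)"
    using zero by (simp add: L_def left_diff_distrib sum_subtractf sum_distrib_left
        sum_distrib_right sum.swap[of _ E] mult.assoc)
  also have "L e = 0" if "e \<in> E" for e
    using E that by (auto simp: L_def sum_fiber_weighted_monomial_eval[OF I es])
  then have "(\<Sum>e\<in>E. c e * L e) = 0" by simp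
  also have "L es = (-1) ^ card I"
    using es es_supp by (simp add: L_def sum_fiber_weighted_monomial_eval[OF I es])
  finally show False by simp
qed

lemma card_points_zero_set_le:
  fixes c :: "(nat \<Rightarrow> nat) \<Rightarrow> 'a::{finite,field}"
  assumes I: "I \<subseteq> {..<k}"
    and es: "\<forall>i\<in>I. 0 < es i \<and> es i < CARD('a)" and es_supp: "\<forall>i\<in>{..<k} - I. es i = 0"
    and E: "\<forall>e\<in>E. (\<forall>i\<in>I. e i < CARD('a)) \<and> (\<exists>i\<in>I. e i \<noteq> es i)"
  shows "card {\<alpha> \<in> points k. monomial_eval k \<alpha> es = (\<Sum>e\<in>E. c e * monomial_eval k \<alpha> e)}
       \<le> CARD('a) ^ k - CARD('a) ^ (k - card I)"
proof -
  let ?Z = "{\<alpha> \<in> points k. monomial_eval k \<alpha> es = (\<Sum>e\<in>E. c e * monomial_eval k \<alpha> e)}"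
  let ?J = "{..<k} - I"
  note fin = finite_points[where 'a = 'a and k = k]
  have "PiE ?J (\<lambda>_. UNIV) \<subseteq> (\<lambda>\<alpha>. restrict \<alpha> ?J) ` (points k - ?Z)"
  proof
    fix b :: "nat \<Rightarrow> 'a" assume b: "b \<in> PiE ?J (\<lambda>_. UNIV)"
    obtain x where x: "x \<in> PiE I (\<lambda>_. UNIV)"
      and nz: "monomial_eval k (\<lambda>i. if i \<in> I then x i else b i) es
             \<noteq> (\<Sum>e\<in>E. c e * monomial_eval k (\<lambda>i. if i \<in> I then x i else b i) e)"
      using exists_fiber_point_nonzero[OF I es es_supp E] by blast
    have "(\<lambda>i. if i \<in> I then x i else b i) \<in> points k"
      using x b I by (auto simp: points_def PiE_def extensional_def)
    moreover have "restrict (\<lambda>i. if i \<in> I then x i else b i) ?J = b"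
      using b by (auto simp: PiE_def extensional_def)
    ultimately show "b \<in> (\<lambda>\<alpha>. restrict \<alpha> ?J) ` (points k - ?Z)"
      using nz by (intro image_eqI[where x = "\<lambda>i. if i \<in> I then x i else b i"]) auto
  qed
  then have "card (PiE ?J (\<lambda>_. UNIV :: 'a set)) \<le> card (points k - ?Z)"
    using fin by (meson card_image_le finite_Diff order_trans card_mono finite_imageI)
  moreover have "card (PiE ?J (\<lambda>_. UNIV :: 'a set)) = CARD('a) ^ (k - card I)"
    using I by (simp add: card_PiE card_Diff_subset finite_subset)
  moreover have "card (points k - ?Z) = card (points k :: (nat \<Rightarrow> 'a) set) - card ?Z"
    using fin by (intro card_Diff_subset) auto
  moreover have "card ?Z \<le> card (points k :: (nat \<Rightarrow> 'a) set)"
    using fin by (intro card_mono) auto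
  ultimately show ?thesis by (simp add: card_points)
qed

text \<open>A slack coordinate \<open>m - 1 - |e|\<^sub>1\<close> turns \<open>e\<close> into a composition of \<open>m - 1\<close> into \<open>k + 1\<close> parts.\<close>
lemma card_Ecal_le:
  assumes "0 < m"
  shows "card (Ecal q k m) \<le> (k + m) choose m"
proof -
  define f where "f e = map e [0..<k] @ [m - 1 - norm1 k e]" for e :: "nat \<Rightarrow> nat"
  have "sum_list (map e [0..<k]) = norm1 k e" for e
    by (simp add: norm1_def sum_list_sum_nth atLeast0LessThan)
  then have "f ` Ecal q k m \<subseteq> {l. length l = k + 1 \<and> sum_list l = m - 1}"
    by (auto simp: f_def Ecal_def)
  moreover have "inj_on f (Ecal q k m)"
  proof
    fix e e' assume "e \<in> Ecal q k m" "e' \<in> Ecal q k m" "f e = f e'"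
    then have "e \<in> exps q k" "e' \<in> exps q k" "\<forall>i<k. e i = e' i"
      by (auto simp: f_def Ecal_def map_eq_conv)
    then show "e = e'"
      unfolding exps_def by (auto intro: PiE_ext)
  qed
  moreover have "finite {l::nat list. length l = k + 1 \<and> sum_list l = m - 1}"
    by (rule card_ge_0_finite) (simp add: card_length_sum_list zero_less_binomial)
  ultimately have "card (Ecal q k m) \<le> card {l::nat list. length l = k + 1 \<and> sum_list l = m - 1}"
    by (metis card_image card_mono)
  also have "\<dots> = (m - 1 + k) choose (m - 1)"
    by (simp add: card_length_sum_list)
  also have "\<dots> \<le> (k + m) choose m"
    using assms by (cases m) (simp_all add: add.commute)
  finally show ?thesis .
qed

lemma Ecal_differs_on_support:
  assumes I: "I \<subseteq> {..<k}" and es_supp: "\<forall>i\<in>{..<k} - I. es i = 0"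
    and e: "e \<in> Ecal q k (norm1 k es)" and pos: "0 < norm1 k es"
  shows "(\<forall>i\<in>I. e i < q) \<and> (\<exists>i\<in>I. e i \<noteq> es i)"
proof
  show "\<forall>i\<in>I. e i < q"
    using I e by (auto simp: Ecal_def exps_def)
  show "\<exists>i\<in>I. e i \<noteq> es i"
  proof (rule ccontr)
    assume "\<not> ?thesis"
    then have "norm1 k es = (\<Sum>i\<in>I. e i)"
      using I es_supp by (auto simp: norm1_def intro!: sum.mono_neutral_right)
    also have "\<dots> \<le> norm1 k e"
      using I by (auto simp: norm1_def intro!: sum_mono2)
    finally show False
      using e pos by (simp add: Ecal_def) linarith
  qed
qed

lemma estar_support:
  assumes "prime p" "0 < l" "q = p ^ l" "s < k"
  shows "\<forall>i\<in>{..s}. 0 < estar p q s k i \<and> estar p q s k i < q"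
    and "\<forall>i\<in>{..<k} - {..s}. estar p q s k i = 0"
    and "0 < norm1 k (estar p q s k)"
proof -
  have "q div p = p ^ (l - 1)"
    using assms(1-3) by (cases l) (auto simp: prime_gt_0_nat)
  moreover have "p ^ (l - 1) < q"
    using assms(1-3) prime_gt_1_nat by (auto intro: power_strict_increasing)
  moreover have "0 < p ^ (l - 1)"
    using assms(1) by (simp add: prime_gt_0_nat)
  moreover have "1 < q"
    using assms(1-3) prime_gt_1_nat[of p] one_less_power[of p l] by simp
  ultimately show bounds: "\<forall>i\<in>{..s}. 0 < estar p q s k i \<and> estar p q s k i < q"
    using assms(4) by (auto simp: estar_def)
  show "\<forall>i\<in>{..<k} - {..s}. estar p q s k i = 0"
    by (simp add: estar_def)
  have "estar p q s k s \<le> norm1 k (estar p q s k)"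
    unfolding norm1_def using assms(4) by (intro member_le_sum) auto
  moreover have "0 < estar p q s k s"
    using bounds by simp
  ultimately show "0 < norm1 k (estar p q s k)"
    by linarith
qed

lemma system_solvable_iff_separated_on:
  "system_solvable q k dstar es S
     \<longleftrightarrow> separated_on S (\<lambda>e \<alpha>. monomial_eval k \<alpha> e) (Ecal q k dstar) (\<lambda>\<alpha>. monomial_eval k \<alpha> es)"
  by (simp add: system_solvable_def separated_on_def)

lemma finite_Ecal: "finite (Ecal q k m)"
  by (rule finite_subset[of _ "exps q k"]) (auto simp: Ecal_def exps_def finite_PiE)

lemma card_non_separated_subsets_le:
  fixes u :: "'e \<Rightarrow> 'p \<Rightarrow> 'a::{finite,field}"
  assumes E: "finite E" and P: "finite P"
    and zero_sets: "\<And>c. card {\<alpha> \<in> P. w \<alpha> = (\<Sum>e\<in>E. c e * u e \<alpha>)} \<le> M"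
  shows "card {S. S \<subseteq> P \<and> card S = n \<and> \<not> separated_on S u E w} \<le> CARD('a) ^ card E * (M choose n)"
proof -
  define Z where "Z c = {\<alpha> \<in> P. w \<alpha> = (\<Sum>e\<in>E. c e * u e \<alpha>)}" for c
  have cover: "{S. S \<subseteq> P \<and> card S = n \<and> \<not> separated_on S u E w}
      \<subseteq> (\<Union>c\<in>PiE E (\<lambda>_. UNIV). {S. S \<subseteq> Z c \<and> card S = n})"
  proof safe
    fix S assume S: "S \<subseteq> P" "\<not> separated_on S u E w"
    then obtain c where c: "\<forall>\<alpha>\<in>S. w \<alpha> = (\<Sum>e\<in>E. c e * u e \<alpha>)"
      using in_span_on_or_separated_on[OF E finite_subset[OF S(1) P], where u = u and w = w]
      by (auto simp: in_span_on_def)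
    have "S \<subseteq> Z (restrict c E)"
      using S(1) c by (auto simp: Z_def intro: sum.cong)
    then show "S \<in> (\<Union>c\<in>PiE E (\<lambda>_. UNIV). {S'. S' \<subseteq> Z c \<and> card S' = card S})"
      by auto
  qed
  have "card {S. S \<subseteq> P \<and> card S = n \<and> \<not> separated_on S u E w}
      \<le> card (\<Union>c\<in>PiE E (\<lambda>_. UNIV). {S. S \<subseteq> Z c \<and> card S = n})"
    by (rule card_mono[OF finite_subset[of _ "Pow P"] cover]) (use P in \<open>auto simp: Z_def\<close>)
  also have "\<dots> \<le> (\<Sum>c\<in>PiE E (\<lambda>_. UNIV::'a set). card {S. S \<subseteq> Z c \<and> card S = n})"
    by (rule card_UN_le) (simp add: E finite_PiE)
  also have "\<dots> \<le> (\<Sum>c\<in>PiE E (\<lambda>_. UNIV::'a set). M choose n)"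
    using P zero_sets by (intro sum_mono) (simp add: Z_def n_subsets binomial_right_mono)
  also have "\<dots> = CARD('a) ^ card E * (M choose n)"
    using E by (simp add: card_PiE)
  finally show ?thesis .
qed

lemma binomial_mult_power_le:
  assumes "M \<le> N"
  shows "real (M choose n) * real N ^ n \<le> real (N choose n) * real M ^ n"
proof (cases "n \<le> M")
  case True
  have prod_eq: "real (K choose n) * real L ^ n * fact n = (\<Prod>i<n. (real K - real i) * real L)" for K L
    by (simp add: binomial_gbinomial gbinomial_mult_fact' prod.distrib atLeast0LessThan)
  have "(\<Prod>i<n. (real M - real i) * real N) \<le> (\<Prod>i<n. (real N - real i) * real M)"
  proof (rule prod_mono)
    fix i assume "i \<in> {..<n}"
    then have "real i * real N \<le> real M * real N" "real M * real i \<le> real N * real i"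
      using True assms by (auto intro: mult_right_mono)
    then show "0 \<le> (real M - real i) * real N \<and> (real M - real i) * real N \<le> (real N - real i) * real M"
      by (simp add: algebra_simps)
  qed
  then show ?thesis by (simp only: prod_eq[symmetric]) simp
qed (simp add: binomial_eq_0)

lemma binomial_ratio_le_exp:
  assumes "M \<le> N" "0 < N"
  shows "real (M choose n) / real (N choose n) \<le> exp (- real n * (1 - real M / real N))"
proof (cases "n \<le> N")
  case True
  have "real (M choose n) / real (N choose n) \<le> (real M / real N) ^ n"
    using binomial_mult_power_le[OF assms(1), of n] assms(2) True
    by (simp add: divide_simps power_divide zero_less_binomial mult.commute)
  also have "\<dots> \<le> exp (- (1 - real M / real N)) ^ n"
    using exp_ge_add_one_self[of "- (1 - real M / real N)"] by (intro power_mono) auto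
  also have "\<dots> = exp (- real n * (1 - real M / real N))"
    by (simp add: exp_of_nat_mult[symmetric] algebra_simps)
  finally show ?thesis .
qed (simp add: binomial_eq_0)

lemma binomial_ratio_le_power_inverse:
  fixes q m k N n :: nat
  assumes q: "2 \<le> q" and "m \<le> k" and n: "2 * real q ^ m * ln (real q) * real N \<le> real n"
  shows "real ((q ^ k - q ^ (k - m)) choose n) / real (q ^ k choose n) \<le> 1 / real q ^ (2 * N)"
proof -
  have split: "real q ^ k = real q ^ (k - m) * real q ^ m"
    using \<open>m \<le> k\<close> by (simp flip: power_add)
  have "q ^ (k - m) \<le> q ^ k"
    using q by (intro power_increasing) auto
  then have "real (q ^ k - q ^ (k - m)) = real q ^ (k - m) * real q ^ m - real q ^ (k - m)"
    by (simp add: of_nat_diff split)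
  then have gap: "1 - real (q ^ k - q ^ (k - m)) / real (q ^ k) = 1 / real q ^ m"
    using q by (simp add: split divide_simps)
  have "real ((q ^ k - q ^ (k - m)) choose n) / real (q ^ k choose n) \<le> exp (- real n * (1 / real q ^ m))"
    using binomial_ratio_le_exp[OF diff_le_self, of "q ^ k" "q ^ (k - m)" n, unfolded gap] q by simp
  also have "\<dots> \<le> exp (- (real (2 * N) * ln (real q)))"
    using n q by (simp add: divide_simps mult_ac)
  also have "\<dots> = inverse (exp (real (2 * N) * ln (real q)))"
    by (rule exp_minus)
  also have "exp (real (2 * N) * ln (real q)) = real q ^ (2 * N)"
    using q by (subst exp_of_nat_mult) simp
  finally show ?thesis by (simp add: inverse_eq_divide)
qed

lemma card_unsolvable_subsets_le:
  assumes I: "I \<subseteq> {..<k}"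
    and es: "\<forall>i\<in>I. 0 < es i \<and> es i < CARD('a::{finite,field})"
    and es_supp: "\<forall>i\<in>{..<k} - I. es i = 0" and pos: "0 < norm1 k es"
  shows "card {S. S \<subseteq> (points k :: (nat \<Rightarrow> 'a) set) \<and> card S = n
                \<and> \<not> system_solvable CARD('a) k (norm1 k es) es S}
       \<le> CARD('a) ^ card (Ecal CARD('a) k (norm1 k es))
          * ((CARD('a) ^ k - CARD('a) ^ (k - card I)) choose n)"
proof -
  let ?E = "Ecal CARD('a) k (norm1 k es)"
  have "\<forall>e\<in>?E. (\<forall>i\<in>I. e i < CARD('a)) \<and> (\<exists>i\<in>I. e i \<noteq> es i)"
    using Ecal_differs_on_support[OF I es_supp _ pos] by blast
  then have "card {\<alpha> \<in> points k. monomial_eval k \<alpha> es = (\<Sum>e\<in>?E. c e * monomial_eval k \<alpha> e)}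
      \<le> CARD('a) ^ k - CARD('a) ^ (k - card I)" for c :: "(nat \<Rightarrow> nat) \<Rightarrow> 'a"
    by (rule card_points_zero_set_le[OF I es es_supp])
  from card_non_separated_subsets_le[OF finite_Ecal finite_points this, of n]
  show ?thesis
    by (simp add: system_solvable_iff_separated_on)
qed

theorem lemma4p3:
  fixes p l q d s r k Qn :: nat
  assumes "prime p" and "l \<ge> 1" and "q = p ^ l" and "CARD('a::{finite,field}) = q"
    and "d \<ge> 1"
    and "d + 1 = s * (q - q div p) + r" and "r < q - q div p"
    and "k \<ge> s + 1"
    and "Qn = nat \<lceil>2 * real q ^ (s + 1) * ln (real q)
                  * real ((k + norm1 k (estar p q s k)) choose norm1 k (estar p q s k))\<rceil>"
    and "Qn \<le> q ^ k"
  shows "(let dstar = norm1 k (estar p q s k);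
              N = (k + dstar) choose dstar;
              AllS = {S :: (nat \<Rightarrow> 'a) set. S \<subseteq> points k \<and> card S = Qn};
              Bad = {S \<in> AllS. \<not> system_solvable q k dstar (estar p q s k) S}
          in real (card Bad) / real (card AllS) \<le> 1 / real q ^ N)"
proof -
  (* The hypotheses on d and r only determine s; the bound holds for every s < k. *)
  define es where "es = estar p q s k"
  define dstar where "dstar = norm1 k es"
  define N where "N = (k + dstar) choose dstar"
  define E where "E = Ecal q k dstar"
  define M where "M = q ^ k - q ^ (k - (s + 1))"
  have q: "2 \<le> q" using card_UNIV_field_ge_2 assms(4) by metis
  have sk: "s < k" using assms(8) by simp
  have l: "0 < l" using assms(2) by simp
  have I: "{..s} \<subseteq> {..<k}" using sk by auto
  note es_support = estar_support[OF assms(1) l assms(3) sk, folded assms(4) es_def]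
  have bad: "card {S. S \<subseteq> (points k :: (nat \<Rightarrow> 'a) set) \<and> card S = Qn \<and> \<not> system_solvable q k dstar es S}
      \<le> q ^ card E * (M choose Qn)"
    using card_unsolvable_subsets_le[OF I es_support, of Qn]
    by (simp add: assms(4) dstar_def E_def M_def)
  have all: "card {S. S \<subseteq> (points k :: (nat \<Rightarrow> 'a) set) \<and> card S = Qn} = q ^ k choose Qn"
    by (simp add: n_subsets finite_points card_points assms(4))
  have "2 * real q ^ (s + 1) * ln (real q) * real N \<le> real Qn"
    using assms(9) of_nat_ceiling by (simp add: N_def dstar_def es_def)
  then have ratio: "real (M choose Qn) / real (q ^ k choose Qn) \<le> 1 / real q ^ (2 * N)"
    unfolding M_def using q sk by (intro binomial_ratio_le_power_inverse) auto
  have "card E \<le> N"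
    unfolding E_def N_def dstar_def using es_support(3) by (rule card_Ecal_le)
  have "real (card {S. S \<subseteq> (points k :: (nat \<Rightarrow> 'a) set) \<and> card S = Qn \<and> \<not> system_solvable q k dstar es S})
      / real (q ^ k choose Qn) \<le> real q ^ card E * (real (M choose Qn) / real (q ^ k choose Qn))"
    using bad by (simp add: divide_right_mono flip: of_nat_power of_nat_mult)
  also have "\<dots> \<le> real q ^ N * (1 / real q ^ (2 * N))"
    using ratio \<open>card E \<le> N\<close> q by (intro mult_mono power_increasing) auto
  also have "\<dots> = 1 / real q ^ N"
    using q by (simp add: mult_2 power_add)
  finally show ?thesis
    using all by (simp add: Let_def es_def dstar_def N_def)
qed

end
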